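(* For every integer $k\ge 3$ and every $\varepsilon>0$ there is $n_0$ such that every $k$-graph $G$ on $n\ge n_0$ vertices with $\delta_{k-2}(G)=(1/4+\varepsilon)\binom{n}{2}$ is $(k-2)$-connected.
   Context: A $k$-graph $G$ has vertex set $V(G)$ and edges that are $k$-subsets. For $1\le d<k$, $\delta_d(G)$ is the largest $m$ such that every $d$-set of vertices lies in at least $m$ edges. The $\ell$-line graph of $G$ is the graph on $E(G)$ in which $e,f$ are adjacent iff $|e\cap f|\ge\ell$. $G$ is $\ell$-connected if it has no isolated vertices and its edges induce a connected subgraph of the $\ell$-line graph. *)

theory Defs
  imports Complex_Main
begin

definition kgraph :: "nat \<Rightarrow> 'a set \<Rightarrow> 'a set set \<Rightarrow> bool" where
  "kgraph k V E \<longleftrightarrow> finite V \<and> (\<forall>e\<in>E. e \<subseteq> V \<and> card e = k)"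

definition deg :: "'a set set \<Rightarrow> 'a set \<Rightarrow> nat" where
  "deg E S = card {e\<in>E. S \<subseteq> e}"

definition min_deg :: "nat \<Rightarrow> 'a set \<Rightarrow> 'a set set \<Rightarrow> nat" where
  "min_deg d V E = Max {m. \<forall>S. S \<subseteq> V \<and> card S = d \<longrightarrow> m \<le> deg E S}"

definition line_adj :: "nat \<Rightarrow> 'a set set \<Rightarrow> ('a set \<times> 'a set) set" where
  "line_adj l E = {(e, f). e \<in> E \<and> f \<in> E \<and> l \<le> card (e \<inter> f)}"

definition l_connected :: "nat \<Rightarrow> 'a set \<Rightarrow> 'a set set \<Rightarrow> bool" where
  "l_connected l V E \<longleftrightarrow> (\<forall>v\<in>V. \<exists>e\<in>E. v \<in> e) \<and>
     (\<forall>e\<in>E. \<forall>f\<in>E. (e, f) \<in> (line_adj l E)\<^sup>*)"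

end

theory Submission
  imports Defs
begin

text \<open>
  The edges through a (k-2)-set S correspond to distinct pairs of vertices of its link, so a
  minimum (k-2)-degree above \<open>(n choose 2)/4\<close> forces every link to have more than n/2 vertices.
  Hence the links of two (k-2)-sets S, T with \<open>|S \<inter> T| = k - 3\<close> share a vertex z, and edges
  through \<open>S \<union> {z}\<close> and \<open>T \<union> {z}\<close> meet in the (k-2)-set \<open>(S \<inter> T) \<union> {z}\<close>.
  Exchanging one vertex at a time leads from any (k-2)-set to any other, which connects
  any two edges in the (k-2)-line graph; nonempty links also rule out isolated vertices.
\<close>

definition link_verts :: "'a set set \<Rightarrow> 'a set \<Rightarrow> 'a set" where
  "link_verts E S = \<Union>{e\<in>E. S \<subseteq> e} - S"

lemma link_verts_subset: "kgraph k V E \<Longrightarrow> link_verts E S \<subseteq> V"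
  unfolding kgraph_def link_verts_def by auto

lemma min_deg_le_deg:
  assumes "S \<subseteq> V" "card S = d"
  shows "min_deg d V E \<le> deg E S"
proof -
  let ?M = "{m. \<forall>S. S \<subseteq> V \<and> card S = d \<longrightarrow> m \<le> deg E S}"
  have "?M \<subseteq> {..deg E S}" using assms by auto
  then have "finite ?M" by (rule finite_subset) simp
  moreover have "0 \<in> ?M" by simp
  ultimately have "Max ?M \<in> ?M" by (intro Max_in) auto
  then show ?thesis using assms unfolding min_deg_def by blast
qed

lemma deg_le_link_verts_choose:
  assumes "kgraph k V E"
  shows "deg E S \<le> card (link_verts E S) choose (k - card S)"
proof -
  let ?L = "link_verts E S"
  have fin: "finite ?L" using assms link_verts_subset finite_subset unfolding kgraph_def by metis
  have "card {e\<in>E. S \<subseteq> e} \<le> card {B. B \<subseteq> ?L \<and> card B = k - card S}"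
  proof (rule card_inj_on_le[where f = "\<lambda>e. e - S"])
    show "inj_on (\<lambda>e. e - S) {e\<in>E. S \<subseteq> e}"
      by (rule inj_onI) blast
    show "(\<lambda>e. e - S) ` {e\<in>E. S \<subseteq> e} \<subseteq> {B. B \<subseteq> ?L \<and> card B = k - card S}"
    proof clarify
      fix e assume e: "e \<in> E" "S \<subseteq> e"
      then have "finite e" "card e = k"
        using assms finite_subset unfolding kgraph_def by auto
      with e show "e - S \<subseteq> ?L \<and> card (e - S) = k - card S"
        by (auto simp: link_verts_def card_Diff_subset finite_subset)
    qed
    show "finite {B. B \<subseteq> ?L \<and> card B = k - card S}" using fin by simp
  qed
  also have "\<dots> = card ?L choose (k - card S)" using fin by (rule n_subsets)
  finally show ?thesis unfolding deg_def .
qed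

lemma less_double_if_choose_two_less:
  fixes n w :: nat
  assumes "n choose 2 < 4 * (w choose 2)"
  shows "n < 2 * w"
proof (rule ccontr)
  assume "\<not> n < 2 * w"
  have "4 * (w choose 2) \<le> 2 * w choose 2"
    by (simp add: choose_two) (cases w; simp add: algebra_simps)
  also have "\<dots> \<le> n choose 2" using \<open>\<not> n < 2 * w\<close> by (intro binomial_right_mono) simp
  finally show False using assms by simp
qed

lemma line_adj_if_common_subset:
  assumes "kgraph k V E" "e \<in> E" "f \<in> E" "S \<subseteq> e \<inter> f" "l \<le> card S"
  shows "(e, f) \<in> line_adj l E"
proof -
  have "finite (e \<inter> f)" using assms(1,2) finite_subset unfolding kgraph_def by blast
  then have "card S \<le> card (e \<inter> f)" using assms(4) by (rule card_mono)
  then show ?thesis using assms unfolding line_adj_def by simp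
qed

locale large_links =
  fixes k l :: nat and V :: "'a set" and E :: "'a set set"
  assumes kgraph: "kgraph k V E"
    and card_link_verts: "\<And>S. S \<subseteq> V \<Longrightarrow> card S = l \<Longrightarrow> card V < 2 * card (link_verts E S)"
begin

lemma finite_V: "finite V"
  using kgraph unfolding kgraph_def by simp

lemma link_verts_meet:
  assumes "S \<subseteq> V" "card S = l" "T \<subseteq> V" "card T = l"
  shows "link_verts E S \<inter> link_verts E T \<noteq> {}"
proof
  assume disj: "link_verts E S \<inter> link_verts E T = {}"
  have sub: "link_verts E S \<subseteq> V" "link_verts E T \<subseteq> V"
    using link_verts_subset[OF kgraph] by blast+
  then have "finite (link_verts E S)" "finite (link_verts E T)"
    using finite_V finite_subset by blast+
  then have "card (link_verts E S) + card (link_verts E T) = card (link_verts E S \<union> link_verts E T)"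
    using disj by (simp add: card_Un_disjoint)
  also have "\<dots> \<le> card V"
    using sub finite_V by (intro card_mono) auto
  finally show False
    using card_link_verts[OF assms(1,2)] card_link_verts[OF assms(3,4)] by linarith
qed

lemma edge_containing:
  assumes "S \<subseteq> V" "card S = l"
  obtains e where "e \<in> E" "S \<subseteq> e"
proof -
  have "link_verts E S \<noteq> {}" using card_link_verts[OF assms] by auto
  then show ?thesis using that unfolding link_verts_def by blast
qed

lemma line_adj_path_if_exchange:
  assumes e: "e \<in> E" "S \<subseteq> e" and f: "f \<in> E" "T \<subseteq> f"
    and ST: "S \<subseteq> V" "card S = l" "T \<subseteq> V" "card T = l" "l \<le> Suc (card (S \<inter> T))"
  shows "(e, f) \<in> (line_adj l E)\<^sup>*"
proof -
  obtain z where "z \<in> link_verts E S" "z \<in> link_verts E T"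
    using link_verts_meet ST by blast
  then obtain e' f' where e': "e' \<in> E" "insert z S \<subseteq> e'" and f': "f' \<in> E" "insert z T \<subseteq> f'"
    and "z \<notin> S" "z \<notin> T"
    unfolding link_verts_def by blast
  have "finite (S \<inter> T)" using ST finite_V finite_subset by blast
  then have "l \<le> card (insert z (S \<inter> T))" using ST \<open>z \<notin> S\<close> by simp
  then have "(e', f') \<in> line_adj l E"
    using e' f' by (intro line_adj_if_common_subset[OF kgraph]) auto
  moreover have "(e, e') \<in> line_adj l E"
    using e e' ST by (intro line_adj_if_common_subset[OF kgraph, of _ _ S]) auto
  moreover have "(f', f) \<in> line_adj l E"
    using f f' ST by (intro line_adj_if_common_subset[OF kgraph, of _ _ T]) auto
  ultimately show ?thesis by (meson r_into_rtrancl rtrancl_trans)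
qed

lemma line_adj_path:
  assumes "e \<in> E" "S \<subseteq> e" "f \<in> E" "T \<subseteq> f"
    and "S \<subseteq> V" "card S = l" "T \<subseteq> V" "card T = l"
  shows "(e, f) \<in> (line_adj l E)\<^sup>*"
  using assms
proof (induction "card (S - T)" arbitrary: S e)
  case 0
  have "finite S" "finite T" using 0 finite_V finite_subset by blast+
  then have "S \<subseteq> T" using 0 by simp
  with \<open>finite T\<close> have "S = T" using 0 by (metis card_subset_eq)
  with 0 show ?case
    by (intro r_into_rtrancl line_adj_if_common_subset[OF kgraph, of _ _ S]) auto
next
  case (Suc m)
  have fin: "finite S" "finite T" using Suc finite_V finite_subset by blast+
  then have "card (T - S) = card (S - T)"
    using Suc.prems(6,8) by (metis card_Diff_subset_Int Int_commute finite_Int)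
  then obtain x y where x: "x \<in> S - T" and y: "y \<in> T - S"
    using Suc.hyps(2) by (metis card.empty ex_in_conv nat.distinct(1))
  define S' where "S' = insert y (S - {x})"
  have S'_V: "S' \<subseteq> V" using x y Suc.prems unfolding S'_def by auto
  have "0 < card S" using x fin(1) card_gt_0_iff by blast
  then have card_S': "card S' = l" using x y fin Suc.prems by (simp add: S'_def card_Diff_singleton)
  have "S' - T = (S - T) - {x}" using x y unfolding S'_def by auto
  then have card_S'_T: "card (S' - T) = m" using x fin Suc.hyps(2) by (simp add: card_Diff_singleton)
  obtain e' where e': "e' \<in> E" "S' \<subseteq> e'" using edge_containing[OF S'_V card_S'] by blast
  have "S - {x} \<subseteq> S \<inter> S'" unfolding S'_def by auto
  then have "card (S - {x}) \<le> card (S \<inter> S')" using fin by (intro card_mono) auto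
  then have "l \<le> Suc (card (S \<inter> S'))" using x fin Suc.prems(6) by (simp add: card_Diff_singleton)
  then have "(e, e') \<in> (line_adj l E)\<^sup>*"
    by (rule line_adj_path_if_exchange[OF Suc.prems(1,2) e' Suc.prems(5,6) S'_V card_S'])
  also have "(e', f) \<in> (line_adj l E)\<^sup>*"
    using Suc.hyps(1)[OF card_S'_T[symmetric] e' Suc.prems(3,4) S'_V card_S' Suc.prems(7,8)] .
  finally show ?case .
qed

theorem l_connected:
  assumes "0 < l" "l \<le> k" "l \<le> card V"
  shows "l_connected l V E"
  unfolding l_connected_def
proof (intro conjI ballI)
  fix v assume v: "v \<in> V"
  then have "l - 1 \<le> card (V - {v})" using assms finite_V by simp
  then obtain S where S: "S \<subseteq> V - {v}" "card S = l - 1"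
    by (meson obtain_subset_with_card_n)
  have "finite S" using S finite_V finite_subset by blast
  then have "card (insert v S) = l" using S assms by (subst card_insert_disjoint) auto
  then obtain e where "e \<in> E" "insert v S \<subseteq> e" using edge_containing S v by blast
  then show "\<exists>e\<in>E. v \<in> e" by blast
next
  fix e f assume ef: "e \<in> E" "f \<in> E"
  then have "card e = k" "card f = k" "e \<subseteq> V" "f \<subseteq> V"
    using kgraph unfolding kgraph_def by auto
  moreover obtain S where "S \<subseteq> e" "card S = l"
    using assms \<open>card e = k\<close> obtain_subset_with_card_n by metis
  moreover obtain T where "T \<subseteq> f" "card T = l"
    using assms \<open>card f = k\<close> obtain_subset_with_card_n by metis
  ultimately show "(e, f) \<in> (line_adj l E)\<^sup>*"
    using ef line_adj_path[of e S f T] by blast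
qed

end

lemma card_link_verts_gt_half:
  fixes \<epsilon> :: real
  assumes kg: "kgraph k V E" and "2 \<le> k" "0 < \<epsilon>" "2 \<le> card V"
    and md: "(1/4 + \<epsilon>) * real (card V choose 2) \<le> real (min_deg (k - 2) V E)"
    and S: "S \<subseteq> V" "card S = k - 2"
  shows "card V < 2 * card (link_verts E S)"
proof -
  have "real (min_deg (k - 2) V E) \<le> real (card (link_verts E S) choose 2)"
    using min_deg_le_deg[OF S, of E] deg_le_link_verts_choose[OF kg, of S] S(2) \<open>2 \<le> k\<close>
    by simp
  moreover have "0 < \<epsilon> * real (card V choose 2)"
    using \<open>0 < \<epsilon>\<close> \<open>2 \<le> card V\<close> by simp
  ultimately have "real (card V choose 2) < real (4 * (card (link_verts E S) choose 2))"
    using md unfolding distrib_right by simp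
  then have "card V choose 2 < 4 * (card (link_verts E S) choose 2)"
    by (simp only: of_nat_less_iff)
  then show ?thesis by (rule less_double_if_choose_two_less)
qed

theorem lemma3p2:
  fixes k :: nat and \<epsilon> :: real
  assumes "k \<ge> 3" and "\<epsilon> > 0"
  shows "\<exists>n0::nat. \<forall>(V::'a set) E. kgraph k V E \<and> card V \<ge> n0 \<and>
           real (min_deg (k - 2) V E) = (1/4 + \<epsilon>) * real (card V choose 2)
           \<longrightarrow> l_connected (k - 2) V E"
proof (intro exI allI impI, elim conjE)
  fix V :: "'a set" and E
  assume kg: "kgraph k V E" and n: "k \<le> card V"
    and md: "real (min_deg (k - 2) V E) = (1/4 + \<epsilon>) * real (card V choose 2)"
  have "large_links k (k - 2) V E"
  proof (rule large_links.intro[OF kg])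
    fix S assume "S \<subseteq> V" "card S = k - 2"
    with kg assms n md show "card V < 2 * card (link_verts E S)"
      by (intro card_link_verts_gt_half[of k V E \<epsilon>]) auto
  qed
  then show "l_connected (k - 2) V E"
    by (rule large_links.l_connected) (use assms n in auto)
qed

end
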